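(* There exists a function $f:\mathbb{N}\to\mathbb{N}$ such that for every natural number $k$, no $k$-modular permutation graph contains an induced path with more than $f(k)$ vertices.
   Context: A permutation graph is the intersection graph of the line segments of a permutation diagram: two parallel horizontal lines, points labelled $1,\ldots,n$ on each, and a segment joining the two points with the same label. A module of a graph $G=(V,E)$ is a set $M\subseteq V$ such that every vertex outside $M$ is adjacent either to all vertices of $M$ or to none of them. A module is strong if it does not overlap any other module. The strong modules form the modular decomposition tree of $G$: each internal node $N$ has as children its maximal proper strong submodules $M_1,\ldots,M_m$, with quotient graph $H_N$ on $\{M_1,\ldots,M_m\}$ where $M_i\sim M_j$ iff all edges between $M_i$ and $M_j$ are present; $N$ is a prime node if $H_N$ is neither edgeless nor complete. A graph is $k$-modular if for every prime node $N$ the quotient graph $H_N$ has at most $k$ vertices. *)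

theory Defs
  imports Main
begin

definition sgraph :: "'a set \<Rightarrow> ('a \<Rightarrow> 'a \<Rightarrow> bool) \<Rightarrow> bool" where
  "sgraph V E \<longleftrightarrow> finite V \<and> (\<forall>u v. E u v \<longrightarrow> u \<in> V \<and> v \<in> V \<and> u \<noteq> v \<and> E v u)"

text \<open>Vertex v is
  the segment joining position p v on the top line to position q v on the bottom line
  (distinct positions on each line); two segments intersect iff they cross.\<close>
definition permutation_graph :: "'a set \<Rightarrow> ('a \<Rightarrow> 'a \<Rightarrow> bool) \<Rightarrow> bool" where
  "permutation_graph V E \<longleftrightarrow>
     (\<exists>(p :: _ \<Rightarrow> nat) (q :: _ \<Rightarrow> nat). inj_on p V \<and> inj_on q V \<and>
        (\<forall>u\<in>V. \<forall>v\<in>V. u \<noteq> v \<longrightarrow> (E u v \<longleftrightarrow> ((p u < p v) \<noteq> (q u < q v)))))"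

definition is_module :: "'a set \<Rightarrow> ('a \<Rightarrow> 'a \<Rightarrow> bool) \<Rightarrow> 'a set \<Rightarrow> bool" where
  "is_module V E M \<longleftrightarrow> M \<noteq> {} \<and> M \<subseteq> V \<and>
     (\<forall>x \<in> V - M. (\<forall>m\<in>M. E x m) \<or> (\<forall>m\<in>M. \<not> E x m))"

definition overlap :: "'a set \<Rightarrow> 'a set \<Rightarrow> bool" where
  "overlap A B \<longleftrightarrow> A \<inter> B \<noteq> {} \<and> \<not> A \<subseteq> B \<and> \<not> B \<subseteq> A"

definition strong_module :: "'a set \<Rightarrow> ('a \<Rightarrow> 'a \<Rightarrow> bool) \<Rightarrow> 'a set \<Rightarrow> bool" where
  "strong_module V E M \<longleftrightarrow> is_module V E M \<and> (\<forall>M'. is_module V E M' \<longrightarrow> \<not> overlap M M')"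

definition md_children :: "'a set \<Rightarrow> ('a \<Rightarrow> 'a \<Rightarrow> bool) \<Rightarrow> 'a set \<Rightarrow> 'a set set" where
  "md_children V E N = {M. strong_module V E M \<and> M \<subset> N \<and>
       \<not> (\<exists>M'. strong_module V E M' \<and> M \<subset> M' \<and> M' \<subset> N)}"

definition quotient_adj :: "('a \<Rightarrow> 'a \<Rightarrow> bool) \<Rightarrow> 'a set \<Rightarrow> 'a set \<Rightarrow> bool" where
  "quotient_adj E M1 M2 \<longleftrightarrow> (\<forall>x\<in>M1. \<forall>y\<in>M2. E x y)"

text \<open>Prime node: an internal node (strong module with at least two vertices) whose
  quotient graph is neither edgeless nor complete.\<close>
definition prime_node :: "'a set \<Rightarrow> ('a \<Rightarrow> 'a \<Rightarrow> bool) \<Rightarrow> 'a set \<Rightarrow> bool" where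
  "prime_node V E N \<longleftrightarrow> strong_module V E N \<and> card N \<ge> 2 \<and>
     (\<exists>M1\<in>md_children V E N. \<exists>M2\<in>md_children V E N. M1 \<noteq> M2 \<and> quotient_adj E M1 M2) \<and>
     (\<exists>M1\<in>md_children V E N. \<exists>M2\<in>md_children V E N. M1 \<noteq> M2 \<and> \<not> quotient_adj E M1 M2)"

definition k_modular :: "nat \<Rightarrow> 'a set \<Rightarrow> ('a \<Rightarrow> 'a \<Rightarrow> bool) \<Rightarrow> bool" where
  "k_modular k V E \<longleftrightarrow> (\<forall>N. prime_node V E N \<longrightarrow> card (md_children V E N) \<le> k)"

definition induced_path :: "'a set \<Rightarrow> ('a \<Rightarrow> 'a \<Rightarrow> bool) \<Rightarrow> 'a list \<Rightarrow> bool" where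
  "induced_path V E xs \<longleftrightarrow> distinct xs \<and> set xs \<subseteq> V \<and>
     (\<forall>i<length xs. \<forall>j<length xs. i < j \<longrightarrow> (E (xs ! i) (xs ! j) \<longleftrightarrow> j = i + 1))"

end

theory Submission
  imports Defs
begin

text \<open>An induced path on n \<ge> 4 vertices has no modules besides singletons and the whole
  path. Hence the smallest strong module N containing a long induced path has the path
  vertices in pairwise distinct children; since consecutive path vertices are adjacent and
  vertices at distance two are not, N is a prime node, and its quotient has at least as many
  vertices as the path.\<close>

definition path_adj :: "nat \<Rightarrow> nat \<Rightarrow> bool" where
  "path_adj i j \<longleftrightarrow> i + 1 = j \<or> j + 1 = i"

lemma path_adj_sym: "path_adj i j \<longleftrightarrow> path_adj j i"
  unfolding path_adj_def by auto

lemma sgraph_sym: "sgraph V E \<Longrightarrow> E u v \<Longrightarrow> E v u"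
  unfolding sgraph_def by blast

lemma induced_path_adj_iff:
  assumes G: "sgraph V E" and P: "induced_path V E xs"
    and ij: "i < length xs" "j < length xs" "i \<noteq> j"
  shows "E (xs ! i) (xs ! j) \<longleftrightarrow> path_adj i j"
proof -
  have ordered: "E (xs ! i) (xs ! j) \<longleftrightarrow> path_adj i j" if "i < j" "j < length xs" for i j
    using P that unfolding induced_path_def path_adj_def by auto
  show ?thesis
  proof (cases "i < j")
    case False
    then have "j < i" using ij by simp
    with ordered[of j i] ij show ?thesis
      using sgraph_sym[OF G] path_adj_sym by blast
  qed (use ordered ij in blast)
qed

lemma is_module_vimage:
  assumes M: "is_module V E M" and f: "f ` W \<subseteq> V"
    and emb: "\<And>i j. i \<in> W \<Longrightarrow> j \<in> W \<Longrightarrow> i \<noteq> j \<Longrightarrow> E (f i) (f j) \<longleftrightarrow> F i j"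
    and meets: "\<exists>i\<in>W. f i \<in> M"
  shows "is_module W F {i \<in> W. f i \<in> M}"
  unfolding is_module_def
proof (intro conjI ballI)
  fix x assume x: "x \<in> W - {i \<in> W. f i \<in> M}"
  then have "f x \<in> V - M" using f by auto
  then have "(\<forall>m\<in>M. E (f x) m) \<or> (\<forall>m\<in>M. \<not> E (f x) m)"
    using M unfolding is_module_def by blast
  then show "(\<forall>m\<in>{i \<in> W. f i \<in> M}. F x m) \<or> (\<forall>m\<in>{i \<in> W. f i \<in> M}. \<not> F x m)"
    using x emb by (metis (mono_tags, lifting) DiffD1 DiffD2 mem_Collect_eq)
qed (use meets in auto)

lemma path_module_no_outside_neighbour:
  assumes I: "is_module {..<n} path_adj I" and n: "4 \<le> n"
    and ab: "a \<in> I" "b \<in> I" "a \<noteq> b" and j: "j < n" "j \<notin> I" and i: "i \<in> I"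
  shows "\<not> path_adj i j"
proof
  have split: "(\<forall>m\<in>I. path_adj d m) \<or> (\<forall>m\<in>I. \<not> path_adj d m)" if "d < n" "d \<notin> I" for d
    using I that unfolding is_module_def by blast
  assume "path_adj i j"
  with split[OF j] i have all: "\<forall>m\<in>I. path_adj j m" by (auto simp: path_adj_sym)
  then have I2: "I \<subseteq> {j - 1, j + 1}" unfolding path_adj_def by auto
  have "1 \<le> j"
  proof (rule ccontr)
    assume "\<not> 1 \<le> j"
    with all have "\<forall>m\<in>I. m = 1" unfolding path_adj_def by auto
    with ab show False by metis
  qed
  have in_I: "j - 1 \<in> I" "j + 1 \<in> I" using I2 ab by auto
  obtain d where "d < n" "d \<notin> I" "path_adj d (j - 1) \<noteq> path_adj d (j + 1)"
  proof (cases "j = 1")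
    case True
    with I2 n show thesis by (intro that[of 3]) (auto simp: path_adj_def)
  next
    case False
    with \<open>1 \<le> j\<close> I2 j show thesis by (intro that[of "j - 2"]) (auto simp: path_adj_def)
  qed
  with split in_I show False by blast
qed

lemma path_module_trivial:
  assumes I: "is_module {..<n} path_adj I" and n: "4 \<le> n"
    and ab: "a \<in> I" "b \<in> I" "a \<noteq> b"
  shows "I = {..<n}"
proof -
  have step: "t \<in> I \<longleftrightarrow> Suc t \<in> I" if "Suc t < n" for t
    using path_module_no_outside_neighbour[OF I n ab, of "Suc t" t]
      path_module_no_outside_neighbour[OF I n ab, of t "Suc t"] that
    by (auto simp: path_adj_def)
  have "t \<in> I \<longleftrightarrow> 0 \<in> I" if "t < n" for t
    using that by (induction t) (auto simp: step)
  moreover have "I \<subseteq> {..<n}" using I unfolding is_module_def by blast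
  ultimately show ?thesis using ab by (metis lessThan_iff subsetD subsetI subset_antisym)
qed

lemma quotient_adj_if_edge:
  assumes "sgraph V E" "is_module V E M1" "is_module V E M2" "M1 \<inter> M2 = {}"
    and "x \<in> M1" "y \<in> M2" "E x y"
  shows "quotient_adj E M1 M2"
  unfolding quotient_adj_def
proof (intro ballI)
  fix x' y' assume x': "x' \<in> M1" and y': "y' \<in> M2"
  have "y \<in> V - M1" "x' \<in> V - M2" using assms x' unfolding is_module_def by auto
  then have "E x' y" using assms x' sgraph_sym unfolding is_module_def by metis
  then show "E x' y'" using \<open>x' \<in> V - M2\<close> assms(3) assms(6) y' unfolding is_module_def by blast
qed

lemma strong_module_subset: "strong_module V E M \<Longrightarrow> M \<subseteq> V"
  unfolding strong_module_def is_module_def by blast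

lemma strong_module_singleton: "v \<in> V \<Longrightarrow> strong_module V E {v}"
  unfolding strong_module_def is_module_def overlap_def by auto

lemma strong_module_whole: "V \<noteq> {} \<Longrightarrow> strong_module V E V"
  unfolding strong_module_def is_module_def overlap_def by blast

lemma finite_strong_modules: "finite V \<Longrightarrow> finite {M. strong_module V E M}"
  by (rule finite_subset[of _ "Pow V"]) (auto dest: strong_module_subset)

lemma finite_md_children: "finite V \<Longrightarrow> finite (md_children V E N)"
  by (rule finite_subset[OF _ finite_strong_modules]) (auto simp: md_children_def)

lemma md_children_disjoint:
  assumes "M1 \<in> md_children V E N" "M2 \<in> md_children V E N" "M1 \<noteq> M2"
  shows "M1 \<inter> M2 = {}"
proof (rule ccontr)
  assume "M1 \<inter> M2 \<noteq> {}"
  moreover have "\<not> overlap M1 M2" using assms unfolding md_children_def strong_module_def by auto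
  ultimately have "M1 \<subseteq> M2 \<or> M2 \<subseteq> M1" unfolding overlap_def by auto
  with assms show False unfolding md_children_def by auto
qed

lemma minimal_strong_module_containing:
  assumes "finite V" "A \<subseteq> V" "A \<noteq> {}"
  obtains N where "strong_module V E N" "A \<subseteq> N"
    "\<And>M. strong_module V E M \<Longrightarrow> A \<subseteq> M \<Longrightarrow> \<not> M \<subset> N"
proof -
  let ?S = "{M. strong_module V E M \<and> A \<subseteq> M}"
  have "finite ?S" using finite_strong_modules[OF assms(1)] by (rule finite_subset[rotated]) blast
  moreover have "V \<in> ?S" using assms by (auto intro: strong_module_whole)
  ultimately obtain N where "N \<in> ?S" and "\<forall>M\<in>?S. M \<subseteq> N \<longrightarrow> N = M"
    using finite_has_minimal2[of ?S V] by blast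
  then show thesis by (intro that) auto
qed

lemma md_child_containing:
  assumes "finite V" "strong_module V E N" "v \<in> N" "N \<noteq> {v}"
  obtains M where "M \<in> md_children V E N" "v \<in> M"
proof -
  let ?T = "{M. strong_module V E M \<and> v \<in> M \<and> M \<subset> N}"
  have "finite ?T" using finite_strong_modules[OF assms(1)] by (rule finite_subset[rotated]) blast
  moreover have "v \<in> V" using assms strong_module_subset by blast
  with assms have "{v} \<in> ?T" by (auto intro: strong_module_singleton)
  ultimately obtain M where M: "M \<in> ?T" and max: "\<forall>M'\<in>?T. M \<subseteq> M' \<longrightarrow> M = M'"
    using finite_has_maximal2[of ?T "{v}"] by blast
  have "M \<in> md_children V E N"
    unfolding md_children_def
  proof (intro CollectI conjI notI)
    show "strong_module V E M" "M \<subset> N" using M by blast+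
    assume "\<exists>M'. strong_module V E M' \<and> M \<subset> M' \<and> M' \<subset> N"
    then obtain M' where "M' \<in> ?T" "M \<subset> M'" using M by blast
    with max show False by blast
  qed
  with M show thesis by (intro that) auto
qed

lemma md_child_meets_path_once:
  assumes G: "sgraph V E" and P: "induced_path V E xs" and n: "4 \<le> length xs"
    and N_min: "\<And>M. strong_module V E M \<Longrightarrow> set xs \<subseteq> M \<Longrightarrow> \<not> M \<subset> N"
    and M: "M \<in> md_children V E N"
    and ij: "i < length xs" "j < length xs" "xs ! i \<in> M" "xs ! j \<in> M"
  shows "i = j"
proof (rule ccontr)
  assume "i \<noteq> j"
  have strong: "strong_module V E M" and "M \<subset> N" using M unfolding md_children_def by blast+
  let ?I = "{t \<in> {..<length xs}. xs ! t \<in> M}"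
  have "is_module {..<length xs} path_adj ?I"
  proof (rule is_module_vimage)
    show "is_module V E M" using strong unfolding strong_module_def by blast
    show "(!) xs ` {..<length xs} \<subseteq> V" using P unfolding induced_path_def by auto
    show "E (xs ! a) (xs ! b) \<longleftrightarrow> path_adj a b"
      if "a \<in> {..<length xs}" "b \<in> {..<length xs}" "a \<noteq> b" for a b
      using induced_path_adj_iff[OF G P] that by simp
    show "\<exists>t\<in>{..<length xs}. xs ! t \<in> M" using ij by blast
  qed
  then have "?I = {..<length xs}" using path_module_trivial[OF _ n, of ?I i j] ij \<open>i \<noteq> j\<close> by simp
  then have "set xs \<subseteq> M" by (metis (no_types, lifting) in_set_conv_nth lessThan_iff mem_Collect_eq subsetI)
  from N_min[OF strong this] \<open>M \<subset> N\<close> show False by contradiction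
qed

lemma prime_nodeI:
  assumes G: "sgraph V E" and N: "strong_module V E N" "2 \<le> card N"
    and children: "A \<in> md_children V E N" "B \<in> md_children V E N" "C \<in> md_children V E N"
    and "A \<noteq> B" "A \<noteq> C" and abc: "a \<in> A" "b \<in> B" "c \<in> C" "E a b" "\<not> E a c"
  shows "prime_node V E N"
  unfolding prime_node_def
proof (intro conjI)
  have "is_module V E A" "is_module V E B"
    using children unfolding md_children_def strong_module_def by blast+
  then have "quotient_adj E A B"
    using quotient_adj_if_edge[OF G _ _ md_children_disjoint] children abc \<open>A \<noteq> B\<close> by blast
  then show "\<exists>M1\<in>md_children V E N. \<exists>M2\<in>md_children V E N. M1 \<noteq> M2 \<and> quotient_adj E M1 M2"
    using children \<open>A \<noteq> B\<close> by blast
  have "\<not> quotient_adj E A C" using abc unfolding quotient_adj_def by blast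
  then show "\<exists>M1\<in>md_children V E N. \<exists>M2\<in>md_children V E N. M1 \<noteq> M2 \<and> \<not> quotient_adj E M1 M2"
    using children \<open>A \<noteq> C\<close> by blast
qed (use N in auto)

lemma induced_path_in_prime_node:
  assumes G: "sgraph V E" and P: "induced_path V E xs" and n: "4 \<le> length xs"
  obtains N where "prime_node V E N" "length xs \<le> card (md_children V E N)"
proof -
  have fin: "finite V" using G unfolding sgraph_def by blast
  have xsV: "set xs \<subseteq> V" and dist: "distinct xs" using P unfolding induced_path_def by auto
  have "xs \<noteq> []" using n by auto
  then have "set xs \<noteq> {}" by simp
  then obtain N where N: "strong_module V E N" "set xs \<subseteq> N"
    and N_min: "\<And>M. strong_module V E M \<Longrightarrow> set xs \<subseteq> M \<Longrightarrow> \<not> M \<subset> N"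
    using minimal_strong_module_containing[OF fin xsV] by blast
  have "finite N" using strong_module_subset[OF N(1)] fin by (rule finite_subset)
  have "4 \<le> card (set xs)" using dist n by (simp add: distinct_card)
  also have "\<dots> \<le> card N" using \<open>finite N\<close> N(2) by (rule card_mono)
  finally have card_N: "4 \<le> card N" .
  have "\<exists>M. M \<in> md_children V E N \<and> xs ! i \<in> M" if "i < length xs" for i
  proof -
    have "xs ! i \<in> N" using N(2) that by auto
    moreover have "N \<noteq> {xs ! i}" using card_N by auto
    ultimately show ?thesis using md_child_containing[OF fin N(1)] by metis
  qed
  then obtain C where C: "\<And>i. i < length xs \<Longrightarrow> C i \<in> md_children V E N"
    "\<And>i. i < length xs \<Longrightarrow> xs ! i \<in> C i"
    by metis
  have C_inj: "inj_on C {..<length xs}"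
  proof (rule inj_onI)
    fix i j assume "i \<in> {..<length xs}" "j \<in> {..<length xs}" "C i = C j"
    then show "i = j" using md_child_meets_path_once[OF G P n N_min C(1)[of i], of i j] C(2) by auto
  qed
  have "length xs \<le> card (md_children V E N)"
    using card_inj_on_le[OF C_inj _ finite_md_children[OF fin]] C(1) by auto
  moreover have "prime_node V E N"
  proof (rule prime_nodeI[OF G N(1)])
    show "2 \<le> card N" using card_N by simp
    show "C 0 \<noteq> C 1" "C 0 \<noteq> C 2" using C_inj n by (auto dest: inj_onD)
    show "E (xs ! 0) (xs ! 1)" "\<not> E (xs ! 0) (xs ! 2)"
      using induced_path_adj_iff[OF G P, of 0 1] induced_path_adj_iff[OF G P, of 0 2] n \<open>xs \<noteq> []\<close>
      by (simp_all add: path_adj_def)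
  qed (use C[of 0] C[of 1] C[of 2] n \<open>xs \<noteq> []\<close> in auto)
  ultimately show thesis by (rule that[rotated])
qed

theorem mainTheorem18:
  shows "\<exists>f :: nat \<Rightarrow> nat. \<forall>k (V :: nat set) E xs.
           sgraph V E \<and> permutation_graph V E \<and> k_modular k V E \<and> induced_path V E xs
           \<longrightarrow> length xs \<le> f k"
proof (intro exI allI impI)
  fix k and V :: "nat set" and E xs
  assume "sgraph V E \<and> permutation_graph V E \<and> k_modular k V E \<and> induced_path V E xs"
  then have G: "sgraph V E" and k: "k_modular k V E" and P: "induced_path V E xs" by auto
  show "length xs \<le> k + 3"
  proof (cases "4 \<le> length xs")
    case True
    then obtain N where "prime_node V E N" "length xs \<le> card (md_children V E N)"
      using induced_path_in_prime_node[OF G P] by blast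
    with k show ?thesis unfolding k_modular_def by fastforce
  qed simp
qed

end
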